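(* The wreath product $\mathbb{Z}_2 \wr \mathbb{Z}^2$ is Cayley $2$-tape linear-time computable.
   Context: For $k>1$, a $k$-tape Turing machine has $k$ semi-infinite tapes, each with the unmodifiable symbol $\boxplus$ in its leftmost cell (occurring only there); $\boxdot$ is the blank symbol. A function $f : \Sigma^* \to \Sigma^*$ is computed on a $k$-tape Turing machine in linear time if there is such a machine and a constant $C>0$ such that for every input $x \in \Sigma^*$ of length $n$, started with first tape $\boxplus x \boxdot^\infty$, the other tapes $\boxplus \boxdot^\infty$, all heads on $\boxplus$, the machine halts in an accepting state in at most $Cn$ steps with the first tape having prefix $\boxplus f(x) \boxdot$ (no restriction on anything else). A finitely generated group $G$ with finite set of semigroup generators $S$ is Cayley $k$-tape linear-time computable if there exist a finite alphabet $\Sigma$, a language $L \subseteq \Sigma^*$, a bijection $\psi : L \to G$ and, for each $s \in S$, a function $f_s : \Sigma^* \to \Sigma^*$ computed on a $k$-tape Turing machine in linear time such that $\psi(f_s(w)) = \psi(w)s$ for all $w \in L$ (this does not depend on the choice of $S$). $\mathbb{Z}_2 \wr \mathbb{Z}^2$ is the restricted wreath product (lamplighter group over $\mathbb{Z}^2$). *)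

theory Defs
  imports Main "HOL-Algebra.Group"
begin

text \<open>Tape symbols: the left-end marker (boxplus), the blank (boxdot), and
  ordinary symbols coded by natural numbers (input letters and work symbols).\<close>
datatype tsym = LMark | Blank | Sym nat

datatype dir = Lft | Stay | Rgt

record tm =
  tm_tapes  :: nat
  tm_states :: "nat set"
  tm_gamma  :: "nat set"
  tm_start  :: nat
  tm_final  :: "nat set"
  tm_accept :: "nat set"
  tm_delta  :: "nat \<Rightarrow> tsym list \<Rightarrow> nat \<times> tsym list \<times> dir list"

type_synonym config = "nat \<times> (nat \<Rightarrow> tsym) list \<times> nat list"

definition tape_syms :: "tm \<Rightarrow> tsym set" where
  "tape_syms M = {LMark, Blank} \<union> Sym ` tm_gamma M"

definition valid_tm :: "nat \<Rightarrow> nat set \<Rightarrow> tm \<Rightarrow> bool" where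
  "valid_tm k \<Sigma> M \<longleftrightarrow>
     tm_tapes M = k \<and> finite (tm_states M) \<and> finite (tm_gamma M) \<and> \<Sigma> \<subseteq> tm_gamma M \<and>
     tm_start M \<in> tm_states M \<and> tm_accept M \<subseteq> tm_final M \<and> tm_final M \<subseteq> tm_states M \<and>
     (\<forall>q \<in> tm_states M - tm_final M. \<forall>rs. length rs = k \<longrightarrow> set rs \<subseteq> tape_syms M \<longrightarrow>
        (case tm_delta M q rs of (q', ws, ms) \<Rightarrow>
           q' \<in> tm_states M \<and> length ws = k \<and> length ms = k \<and> set ws \<subseteq> tape_syms M \<and>
           (\<forall>i<k. (rs ! i = LMark \<longrightarrow> ws ! i = LMark \<and> ms ! i \<noteq> Lft) \<and>
                  (rs ! i \<noteq> LMark \<longrightarrow> ws ! i \<noteq> LMark))))"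

fun move :: "dir \<Rightarrow> nat \<Rightarrow> nat" where
  "move Lft h = h - 1"
| "move Stay h = h"
| "move Rgt h = h + 1"

definition tm_step :: "tm \<Rightarrow> config \<Rightarrow> config" where
  "tm_step M c = (case c of (q, tps, hs) \<Rightarrow>
     if q \<in> tm_final M then c else
     (let k = tm_tapes M;
          rs = map (\<lambda>i. (tps ! i) (hs ! i)) [0..<k] in
      case tm_delta M q rs of (q', ws, ms) \<Rightarrow>
        (q', map (\<lambda>i. (tps ! i)(hs ! i := ws ! i)) [0..<k],
             map (\<lambda>i. move (ms ! i) (hs ! i)) [0..<k])))"

definition tm_run :: "tm \<Rightarrow> nat \<Rightarrow> config \<Rightarrow> config" where
  "tm_run M t c = (tm_step M ^^ t) c"

definition input_tape :: "nat list \<Rightarrow> nat \<Rightarrow> tsym" where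
  "input_tape x = (\<lambda>i. if i = 0 then LMark else if i \<le> length x then Sym (x ! (i - 1)) else Blank)"

definition empty_tape :: "nat \<Rightarrow> tsym" where
  "empty_tape = (\<lambda>i. if i = 0 then LMark else Blank)"

definition init_config :: "tm \<Rightarrow> nat list \<Rightarrow> config" where
  "init_config M x = (tm_start M, input_tape x # replicate (tm_tapes M - 1) empty_tape,
                      replicate (tm_tapes M) 0)"

definition has_output :: "(nat \<Rightarrow> tsym) \<Rightarrow> nat list \<Rightarrow> bool" where
  "has_output tp y \<longleftrightarrow> tp 0 = LMark \<and> (\<forall>i < length y. tp (Suc i) = Sym (y ! i)) \<and>
                       tp (Suc (length y)) = Blank"

text \<open>f : Sigma* -> Sigma* is computed on a k-tape machine in linear time.
  The time bound is C*(n+1) (the literal bound C*n would force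
  the machine to halt immediately on the empty input).\<close>
definition lintime_computable :: "nat \<Rightarrow> nat set \<Rightarrow> (nat list \<Rightarrow> nat list) \<Rightarrow> bool" where
  "lintime_computable k \<Sigma> f \<longleftrightarrow>
     (\<exists>M C. valid_tm k \<Sigma> M \<and> C > (0::nat) \<and>
        (\<forall>x \<in> lists \<Sigma>. f x \<in> lists \<Sigma> \<and>
           (\<exists>t \<le> C * (length x + 1).
              (case tm_run M t (init_config M x) of (q, tps, hs) \<Rightarrow>
                 q \<in> tm_accept M \<and> has_output (tps ! 0) (f x)))))"

definition semigroup_generates :: "('g, 'b) monoid_scheme \<Rightarrow> 'g set \<Rightarrow> bool" where
  "semigroup_generates G S \<longleftrightarrow> S \<subseteq> carrier G \<and>
     (\<forall>g \<in> carrier G. \<exists>xs. xs \<noteq> [] \<and> set xs \<subseteq> S \<and> g = foldr (\<lambda>a b. a \<otimes>\<^bsub>G\<^esub> b) xs \<one>\<^bsub>G\<^esub>)"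

definition cayley_lintime_wrt :: "nat \<Rightarrow> ('g, 'b) monoid_scheme \<Rightarrow> 'g set \<Rightarrow> bool" where
  "cayley_lintime_wrt k G S \<longleftrightarrow>
     (\<exists>(\<Sigma>::nat set) L (\<psi>::nat list \<Rightarrow> 'g). finite \<Sigma> \<and> L \<subseteq> lists \<Sigma> \<and> bij_betw \<psi> L (carrier G) \<and>
        (\<forall>s \<in> S. \<exists>f. lintime_computable k \<Sigma> f \<and>
           (\<forall>w \<in> L. f w \<in> L \<and> \<psi> (f w) = \<psi> w \<otimes>\<^bsub>G\<^esub> s)))"

definition cayley_lintime :: "nat \<Rightarrow> ('g, 'b) monoid_scheme \<Rightarrow> bool" where
  "cayley_lintime k G \<longleftrightarrow> group G \<and>
     (\<exists>S. finite S \<and> semigroup_generates G S \<and> cayley_lintime_wrt k G S)"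

text \<open>Elements (f, v): f a finitely supported configuration of Z_2-lamps on Z^2
  (Z_2 represented by bool with xor), v in Z^2.
  (f, v)(g, w) = (f + v.g, v + w) where (v.g)(p) = g(p - v).\<close>
definition lamplighter2 :: "((int \<times> int \<Rightarrow> bool) \<times> (int \<times> int)) monoid" where
  "lamplighter2 = \<lparr> carrier = {(f, v). finite {p. f p}},
     mult = (\<lambda>(f, v) (g, w). (\<lambda>p. f p \<noteq> g (fst p - fst v, snd p - snd v),
                              (fst v + fst w, snd v + snd w))),
     one = (\<lambda>_. False, (0, 0)) \<rparr>"

end

theory Submission
  imports Defs "HOL-Library.Countable" "HOL-Library.Product_Lexorder"
begin

text \<open>
  An element \<open>(f, v)\<close> is coded by the position \<open>v\<close> of the lamplighter followed by the lit lamps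
  relative to \<open>v\<close> in lexicographic order, each point written in signed unary. Right multiplication
  by a generator is then a single left-to-right pass emitting at most two letters per letter read:
  a unit step of the lamplighter changes one coordinate of \<open>v\<close> by \<open>\<plusminus>1\<close> and that of every lamp
  by \<open>\<minusplus>1\<close>, and toggling the lamp under the lamplighter deletes or inserts the code of the origin,
  whose place is where the relative positions change sign. A two-tape machine runs such a
  transducer writing on its second tape and copies the result back, in linear time.
\<close>

section \<open>Linear-time computation by sequential transducers\<close>

lemma tm_run_0 [simp]: "tm_run M 0 c = c"
  by (simp add: tm_run_def)

lemma tm_run_Suc: "tm_run M (Suc n) c = tm_step M (tm_run M n c)"
  by (simp add: tm_run_def)

lemma tm_run_Suc_right: "tm_run M (Suc n) c = tm_run M n (tm_step M c)"
  by (simp only: tm_run_def funpow_Suc_right comp_def)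

lemma tm_run_add: "tm_run M (m + n) c = tm_run M n (tm_run M m c)"
  by (simp only: tm_run_def add.commute[of m n] funpow_add comp_def)

lemma input_tape_eq_LMark_iff [simp]: "input_tape w i = LMark \<longleftrightarrow> i = 0"
  by (simp add: input_tape_def)

lemma input_tape_end [simp]: "input_tape w (Suc (length w)) = Blank"
  by (simp add: input_tape_def)

lemma input_tape_nth: "i < length w \<Longrightarrow> input_tape w (Suc i) = Sym (w ! i)"
  by (simp add: input_tape_def)

lemma input_tape_snoc: "(input_tape w)(Suc (length w) := Sym c) = input_tape (w @ [c])"
  by (auto simp: input_tape_def nth_append fun_eq_iff le_Suc_eq)

text \<open>Generalized sequential machines (gsm), i.e. deterministic finite transducers.\<close>

type_synonym gsm_trans = "nat \<Rightarrow> nat \<Rightarrow> nat \<times> nat list"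

fun gsm_run :: "gsm_trans \<Rightarrow> nat \<Rightarrow> nat list \<Rightarrow> nat \<times> nat list" where
  "gsm_run \<delta> q [] = (q, [])"
| "gsm_run \<delta> q (a # w) = (let (q1, u) = \<delta> q a; (q2, v) = gsm_run \<delta> q1 w in (q2, u @ v))"

definition gsm_fun :: "gsm_trans \<Rightarrow> (nat \<Rightarrow> nat list) \<Rightarrow> nat \<Rightarrow> nat list \<Rightarrow> nat list" where
  "gsm_fun \<delta> \<omega> q w = (let (q', u) = gsm_run \<delta> q w in u @ \<omega> q')"

lemma gsm_run_append:
  "gsm_run \<delta> q u = (q1, v1) \<Longrightarrow> gsm_run \<delta> q1 w = (q2, v2) \<Longrightarrow> gsm_run \<delta> q (u @ w) = (q2, v1 @ v2)"
proof (induction u arbitrary: q v1)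
  case (Cons a u)
  obtain qa va where "\<delta> q a = (qa, va)" by force
  with Cons show ?case by (auto split: prod.splits)
qed simp

lemma gsm_fun_append: "gsm_run \<delta> q u = (q1, v) \<Longrightarrow> gsm_fun \<delta> \<omega> q (u @ w) = v @ gsm_fun \<delta> \<omega> q1 w"
  by (cases "gsm_run \<delta> q1 w") (simp add: gsm_fun_def gsm_run_append)

lemma gsm_run_copy: "(\<And>a. a \<in> set w \<Longrightarrow> \<delta> q a = (q, [a])) \<Longrightarrow> gsm_run \<delta> q w = (q, w)"
  by (induction w) auto

lemma length_gsm_run:
  "(\<And>q a. length (snd (\<delta> q a)) \<le> K) \<Longrightarrow> length (snd (gsm_run \<delta> q w)) \<le> K * length w"
proof (induction w arbitrary: q)
  case (Cons a w)
  obtain q1 u where "\<delta> q a = (q1, u)" by force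
  moreover have "length (snd (gsm_run \<delta> q1 w)) \<le> K * length w"
    using Cons by blast
  ultimately show ?case
    using Cons.prems[of q a] by (cases "gsm_run \<delta> q1 w") simp
qed simp

lemma set_gsm_run:
  "(\<And>q a. a \<in> \<Sigma> \<Longrightarrow> set (snd (\<delta> q a)) \<subseteq> \<Sigma>) \<Longrightarrow> set w \<subseteq> \<Sigma> \<Longrightarrow> set (snd (gsm_run \<delta> q w)) \<subseteq> \<Sigma>"
proof (induction w arbitrary: q)
  case (Cons a w)
  obtain q1 u where "\<delta> q a = (q1, u)" by force
  moreover have "set (snd (gsm_run \<delta> q1 w)) \<subseteq> \<Sigma>"
    using Cons by simp
  ultimately show ?case
    using Cons.prems(1)[of a q] Cons.prems(2) by (cases "gsm_run \<delta> q1 w") simp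
qed simp

definition gsm_bounded :: "nat set \<Rightarrow> nat \<Rightarrow> nat \<Rightarrow> gsm_trans \<Rightarrow> (nat \<Rightarrow> nat list) \<Rightarrow> bool" where
  "gsm_bounded \<Sigma> Q K \<delta> \<omega> \<longleftrightarrow>
     (\<forall>q a. fst (\<delta> q a) < Q \<and> length (snd (\<delta> q a)) \<le> K \<and> (a \<in> \<Sigma> \<longrightarrow> set (snd (\<delta> q a)) \<subseteq> \<Sigma>)) \<and>
     (\<forall>q. length (\<omega> q) \<le> K \<and> set (\<omega> q) \<subseteq> \<Sigma>)"

text \<open>The simulating machine runs the transducer on tape 0, writing its output on tape 1
  (the word a transition emits is buffered in the finite control), then rewinds both heads
  and copies tape 1 over tape 0, closing it with a blank.\<close>

datatype sim_state = Start | Scan nat "nat list" | Flush "nat list" | Rewind | Copy | Halt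

instance sim_state :: countable
  by countable_datatype

fun sim_trans :: "gsm_trans \<Rightarrow> (nat \<Rightarrow> nat list) \<Rightarrow> nat \<Rightarrow> sim_state \<Rightarrow> tsym \<Rightarrow> tsym \<Rightarrow>
    sim_state \<times> tsym \<times> tsym \<times> dir \<times> dir" where
  "sim_trans \<delta> \<omega> q0 Start r0 r1 = (Scan q0 [], r0, r1, Rgt, Rgt)"
| "sim_trans \<delta> \<omega> q0 (Scan q (c # p)) r0 r1 = (Scan q p, r0, Sym c, Stay, Rgt)"
| "sim_trans \<delta> \<omega> q0 (Scan q []) r0 r1 = (case r0 of
      Sym a \<Rightarrow> (Scan (fst (\<delta> q a)) (snd (\<delta> q a)), r0, r1, Rgt, Stay)
    | _ \<Rightarrow> (Flush (\<omega> q), r0, r1, Stay, Stay))"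
| "sim_trans \<delta> \<omega> q0 (Flush (c # p)) r0 r1 = (Flush p, r0, Sym c, Stay, Rgt)"
| "sim_trans \<delta> \<omega> q0 (Flush []) r0 r1 = (Rewind, r0, r1, Stay, Stay)"
| "sim_trans \<delta> \<omega> q0 Rewind r0 r1 =
    (if r0 = LMark \<and> r1 = LMark then (Copy, r0, r1, Rgt, Rgt) else (Rewind, r0, r1, Lft, Lft))"
| "sim_trans \<delta> \<omega> q0 Copy r0 r1 = (case r1 of
      Sym c \<Rightarrow> (Copy, Sym c, r1, Rgt, Rgt)
    | _ \<Rightarrow> (Halt, Blank, r1, Stay, Stay))"
| "sim_trans \<delta> \<omega> q0 Halt r0 r1 = (Halt, r0, r1, Stay, Stay)"

text \<open>These guards make the machine respect the left-end marker by construction.\<close>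

definition guard_write :: "tsym \<Rightarrow> tsym \<Rightarrow> tsym" where
  "guard_write r w = (if r = LMark then LMark else if w = LMark then r else w)"

definition guard_move :: "tsym \<Rightarrow> dir \<Rightarrow> dir" where
  "guard_move r m = (if r = LMark \<and> m = Lft then Stay else m)"

lemma guard_write_same [simp]: "guard_write r r = r"
  and guard_write_Sym [simp]: "r \<noteq> LMark \<Longrightarrow> guard_write r (Sym c) = Sym c"
  and guard_write_Blank [simp]: "r \<noteq> LMark \<Longrightarrow> guard_write r Blank = Blank"
  and guard_move_Stay [simp]: "guard_move r Stay = Stay"
  and guard_move_Rgt [simp]: "guard_move r Rgt = Rgt"
  by (simp_all add: guard_write_def guard_move_def)

definition short_words :: "nat set \<Rightarrow> nat \<Rightarrow> nat list set" where
  "short_words \<Sigma> K = {p. set p \<subseteq> \<Sigma> \<and> length p \<le> K}"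

definition sim_states :: "nat set \<Rightarrow> nat \<Rightarrow> nat \<Rightarrow> sim_state set" where
  "sim_states \<Sigma> Q K = {Start, Rewind, Copy, Halt} \<union> case_prod Scan ` ({..<Q} \<times> short_words \<Sigma> K)
     \<union> Flush ` short_words \<Sigma> K"

definition gsm_tm :: "nat set \<Rightarrow> nat \<Rightarrow> nat \<Rightarrow> gsm_trans \<Rightarrow> (nat \<Rightarrow> nat list) \<Rightarrow> nat \<Rightarrow> tm" where
  "gsm_tm \<Sigma> Q K \<delta> \<omega> q0 = \<lparr>tm_tapes = 2, tm_states = to_nat ` sim_states \<Sigma> Q K, tm_gamma = \<Sigma>,
     tm_start = to_nat Start, tm_final = {to_nat Halt}, tm_accept = {to_nat Halt},
     tm_delta = (\<lambda>q rs. case sim_trans \<delta> \<omega> q0 (from_nat q) (rs ! 0) (rs ! 1) of (s', w0, w1, m0, m1) \<Rightarrow>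
        (to_nat s', [guard_write (rs ! 0) w0, guard_write (rs ! 1) w1],
         [guard_move (rs ! 0) m0, guard_move (rs ! 1) m1]))\<rparr>"

locale gsm_simulation =
  fixes \<Sigma> :: "nat set" and Q K :: nat and \<delta> :: gsm_trans and \<omega> :: "nat \<Rightarrow> nat list" and q0 :: nat
begin

abbreviation M :: tm where "M \<equiv> gsm_tm \<Sigma> Q K \<delta> \<omega> q0"

lemma tm_step_gsm_tm:
  "tm_step M (to_nat s, [t0, t1], [h0, h1]) =
    (if s = Halt then (to_nat s, [t0, t1], [h0, h1]) else
     case sim_trans \<delta> \<omega> q0 s (t0 h0) (t1 h1) of (s', w0, w1, m0, m1) \<Rightarrow>
       (to_nat s', [t0(h0 := guard_write (t0 h0) w0), t1(h1 := guard_write (t1 h1) w1)],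
        [move (guard_move (t0 h0) m0) h0, move (guard_move (t1 h1) m1) h1]))"
  by (auto simp: tm_step_def gsm_tm_def numeral_2_eq_2 upt_rec split: prod.splits)

lemma tm_run_emit:
  assumes "E = Scan q \<or> E = Flush"
  shows "tm_run M (length p) (to_nat (E p), [t0, input_tape v], [h0, Suc (length v)]) =
    (to_nat (E []), [t0, input_tape (v @ p)], [h0, Suc (length (v @ p))])"
proof (induction p arbitrary: v)
  case (Cons c p)
  have "tm_step M (to_nat (E (c # p)), [t0, input_tape v], [h0, Suc (length v)]) =
      (to_nat (E p), [t0, input_tape (v @ [c])], [h0, Suc (length (v @ [c]))])"
    using assms by (elim disjE) (simp_all add: tm_step_gsm_tm input_tape_snoc)
  then show ?case
    using Cons.IH[of "v @ [c]"] by (simp only: length_Cons tm_run_Suc_right) simp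
qed simp

lemma tm_run_scan:
  "x = u @ w \<Longrightarrow>
   tm_run M (length w + length (snd (gsm_run \<delta> q w)) + 1)
     (to_nat (Scan q []), [input_tape x, input_tape v], [Suc (length u), Suc (length v)]) =
   (to_nat (Flush (\<omega> (fst (gsm_run \<delta> q w)))), [input_tape x, input_tape (v @ snd (gsm_run \<delta> q w))],
    [Suc (length x), Suc (length (v @ snd (gsm_run \<delta> q w)))])"
proof (induction w arbitrary: u v q)
  case Nil
  then show ?case by (simp add: tm_step_gsm_tm tm_run_Suc_right fun_upd_idem_iff)
next
  case (Cons a w)
  obtain q1 v1 where \<delta>: "\<delta> q a = (q1, v1)" by force
  obtain q2 v2 where run: "gsm_run \<delta> q1 w = (q2, v2)" by force
  let ?C = "(to_nat (Scan q []), [input_tape x, input_tape v], [Suc (length u), Suc (length v)])"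
  have "input_tape x (Suc (length u)) = Sym a"
    using Cons.prems by (simp add: input_tape_nth)
  then have step: "tm_step M ?C =
      (to_nat (Scan q1 v1), [input_tape x, input_tape v], [Suc (length (u @ [a])), Suc (length v)])"
    using \<delta> by (simp add: tm_step_gsm_tm fun_upd_idem_iff)
  have emit: "tm_run M (length v1) (to_nat (Scan q1 v1), [input_tape x, input_tape v],
      [Suc (length (u @ [a])), Suc (length v)]) =
    (to_nat (Scan q1 []), [input_tape x, input_tape (v @ v1)], [Suc (length (u @ [a])), Suc (length (v @ v1))])"
    by (rule tm_run_emit[where E = "Scan q1" and q = q1]) simp
  have rest: "tm_run M (length w + length v2 + 1)
      (to_nat (Scan q1 []), [input_tape x, input_tape (v @ v1)], [Suc (length (u @ [a])), Suc (length (v @ v1))]) =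
    (to_nat (Flush (\<omega> q2)), [input_tape x, input_tape (v @ v1 @ v2)], [Suc (length x), Suc (length (v @ v1 @ v2))])"
    using Cons.IH[where u = "u @ [a]" and v = "v @ v1" and q = q1] Cons.prems run by simp
  have "tm_run M (Suc (length v1 + (length w + length v2 + 1))) ?C =
    (to_nat (Flush (\<omega> q2)), [input_tape x, input_tape (v @ v1 @ v2)], [Suc (length x), Suc (length (v @ v1 @ v2))])"
    by (simp only: tm_run_Suc_right tm_run_add[of _ "length v1"] step emit rest)
  moreover have "gsm_run \<delta> q (a # w) = (q2, v1 @ v2)"
    using \<delta> run by simp
  ultimately show ?case
    by (simp add: algebra_simps)
qed

lemma tm_run_rewind:
  assumes "\<And>i. t0 i = LMark \<longleftrightarrow> i = 0" and "\<And>i. t1 i = LMark \<longleftrightarrow> i = 0"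
  shows "tm_run M (max h0 h1 + 1) (to_nat Rewind, [t0, t1], [h0, h1]) = (to_nat Copy, [t0, t1], [1, 1])"
proof -
  have "tm_run M k (to_nat Rewind, [t0, t1], [h0, h1]) = (to_nat Rewind, [t0, t1], [h0 - k, h1 - k])"
    if "k \<le> max h0 h1" for k
    using that
  proof (induction k)
    case (Suc k)
    then have "h0 - k \<noteq> 0 \<or> h1 - k \<noteq> 0"
      by linarith
    then have "\<not> (t0 (h0 - k) = LMark \<and> t1 (h1 - k) = LMark)"
      using assms by simp
    moreover have "move (guard_move (t i) Lft) i = i - 1" if "t i = LMark \<longleftrightarrow> i = 0" for t i
      using that by (cases "i = 0") (simp_all add: guard_move_def)
    ultimately have "tm_step M (to_nat Rewind, [t0, t1], [h0 - k, h1 - k]) =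
        (to_nat Rewind, [t0, t1], [h0 - Suc k, h1 - Suc k])"
      using assms by (simp add: tm_step_gsm_tm)
    with Suc show ?case
      by (simp only: Suc_eq_plus1 tm_run_add) (simp add: tm_run_Suc_right)
  qed simp
  from this[of "max h0 h1"] show ?thesis
    using assms by (simp add: tm_run_Suc tm_step_gsm_tm)
qed

definition write_prefix :: "(nat \<Rightarrow> tsym) \<Rightarrow> nat list \<Rightarrow> nat \<Rightarrow> nat \<Rightarrow> tsym" where
  "write_prefix t y j = (\<lambda>i. if 0 < i \<and> i \<le> j then Sym (y ! (i - 1)) else t i)"

lemma tm_run_copy:
  assumes t0: "\<And>i. t0 i = LMark \<longleftrightarrow> i = 0"
  shows "\<exists>t hs. tm_run M (length y + 1) (to_nat Copy, [t0, input_tape y], [1, 1]) =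
    (to_nat Halt, [t, input_tape y], hs) \<and> has_output t y"
proof -
  have "tm_run M j (to_nat Copy, [t0, input_tape y], [1, 1]) =
      (to_nat Copy, [write_prefix t0 y j, input_tape y], [Suc j, Suc j])" if "j \<le> length y" for j
    using that
  proof (induction j)
    case 0
    then show ?case by (simp add: write_prefix_def fun_eq_iff)
  next
    case (Suc j)
    have "(write_prefix t0 y j)(Suc j := Sym (y ! j)) = write_prefix t0 y (Suc j)"
      by (auto simp: write_prefix_def fun_eq_iff le_Suc_eq)
    then have "tm_step M (to_nat Copy, [write_prefix t0 y j, input_tape y], [Suc j, Suc j]) =
        (to_nat Copy, [write_prefix t0 y (Suc j), input_tape y], [Suc (Suc j), Suc (Suc j)])"
      using Suc.prems t0 by (simp add: tm_step_gsm_tm input_tape_nth write_prefix_def fun_upd_idem_iff)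
    with Suc show ?case
      by (simp only: Suc_eq_plus1 tm_run_add) (simp add: tm_run_Suc_right)
  qed
  from this[of "length y"]
  have "tm_run M (length y + 1) (to_nat Copy, [t0, input_tape y], [1, 1]) =
      (to_nat Halt, [(write_prefix t0 y (length y))(Suc (length y) := Blank), input_tape y],
       [Suc (length y), Suc (length y)])"
    using t0 by (simp add: tm_run_Suc tm_step_gsm_tm write_prefix_def fun_upd_idem_iff)
  moreover have "has_output ((write_prefix t0 y (length y))(Suc (length y) := Blank)) y"
    using t0 by (auto simp: has_output_def write_prefix_def)
  ultimately show ?thesis by blast
qed

lemma tm_run_gsm_tm:
  fixes x :: "nat list"
  defines "y \<equiv> gsm_fun \<delta> \<omega> q0 x"
  shows "\<exists>t t1 hs. tm_run M (length x + 2 * length y + max (length x) (length y) + 6) (init_config M x) =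
    (to_nat Halt, [t, t1], hs) \<and> has_output t y"
proof -
  obtain q' u where run: "gsm_run \<delta> q0 x = (q', u)" by force
  then have y: "y = u @ \<omega> q'"
    by (simp add: y_def gsm_fun_def)
  define t_scan where "t_scan = length x + length u + 1"
  define t_rewind where "t_rewind = max (Suc (length x)) (Suc (length y)) + 1"
  define t_copy where "t_copy = length y + 1"
  have init: "init_config M x = (to_nat Start, [input_tape x, input_tape []], [0, 0])"
    by (simp add: init_config_def gsm_tm_def empty_tape_def input_tape_def numeral_2_eq_2 fun_eq_iff)
  have start: "tm_run M 1 (to_nat Start, [input_tape x, input_tape []], [0, 0]) =
      (to_nat (Scan q0 []), [input_tape x, input_tape []], [1, 1])"
    by (simp add: tm_run_Suc tm_step_gsm_tm fun_upd_idem_iff)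
  have scan: "tm_run M t_scan (to_nat (Scan q0 []), [input_tape x, input_tape []], [1, 1]) =
      (to_nat (Flush (\<omega> q')), [input_tape x, input_tape u], [Suc (length x), Suc (length u)])"
    using tm_run_scan[of x "[]" x q0 "[]"] run by (simp add: t_scan_def)
  have flush: "tm_run M (length (\<omega> q')) (to_nat (Flush (\<omega> q')), [input_tape x, input_tape u],
      [Suc (length x), Suc (length u)]) =
    (to_nat (Flush []), [input_tape x, input_tape y], [Suc (length x), Suc (length y)])"
    unfolding y by (rule tm_run_emit) simp
  have rewind_start: "tm_run M 1 (to_nat (Flush []), [input_tape x, input_tape y], [Suc (length x), Suc (length y)]) =
      (to_nat Rewind, [input_tape x, input_tape y], [Suc (length x), Suc (length y)])"
    by (simp add: tm_run_Suc tm_step_gsm_tm fun_upd_idem_iff)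
  have rewind: "tm_run M t_rewind (to_nat Rewind, [input_tape x, input_tape y], [Suc (length x), Suc (length y)]) =
      (to_nat Copy, [input_tape x, input_tape y], [1, 1])"
    unfolding t_rewind_def by (rule tm_run_rewind) simp_all
  obtain t hs where copy: "tm_run M t_copy (to_nat Copy, [input_tape x, input_tape y], [1, 1]) =
      (to_nat Halt, [t, input_tape y], hs)" and "has_output t y"
    using tm_run_copy[of "input_tape x" y] unfolding t_copy_def by auto
  moreover have "tm_run M (1 + t_scan + length (\<omega> q') + 1 + t_rewind + t_copy) (init_config M x) =
      (to_nat Halt, [t, input_tape y], hs)"
    by (simp only: init tm_run_add start scan flush rewind_start rewind copy)
  moreover have "length x + 2 * length y + max (length x) (length y) + 6 =
      1 + t_scan + length (\<omega> q') + 1 + t_rewind + t_copy"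
    by (simp add: t_scan_def t_rewind_def t_copy_def y)
  ultimately show ?thesis by metis
qed

end

lemma sim_trans_closed:
  assumes bounded: "gsm_bounded \<Sigma> Q K \<delta> \<omega>" and "q0 < Q" and s: "s \<in> sim_states \<Sigma> Q K"
    and "r0 \<in> {LMark, Blank} \<union> Sym ` \<Sigma>" and "r1 \<in> {LMark, Blank} \<union> Sym ` \<Sigma>"
    and trans: "sim_trans \<delta> \<omega> q0 s r0 r1 = (s', w0, w1, m0, m1)"
  shows "s' \<in> sim_states \<Sigma> Q K \<and> w0 \<in> {LMark, Blank} \<union> Sym ` \<Sigma> \<and> w1 \<in> {LMark, Blank} \<union> Sym ` \<Sigma>"
proof -
  have \<delta>: "fst (\<delta> q a) < Q" "a \<in> \<Sigma> \<Longrightarrow> snd (\<delta> q a) \<in> short_words \<Sigma> K" "\<omega> q \<in> short_words \<Sigma> K" for q a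
    using bounded by (auto simp: gsm_bounded_def short_words_def)
  have tl: "c # p \<in> short_words \<Sigma> K \<Longrightarrow> p \<in> short_words \<Sigma> K \<and> c \<in> \<Sigma>" for c p
    by (auto simp: short_words_def)
  have "[] \<in> short_words \<Sigma> K"
    by (simp add: short_words_def)
  show ?thesis
  proof (cases s)
    case (Scan q p)
    with s have "q < Q" "p \<in> short_words \<Sigma> K"
      by (auto simp: sim_states_def)
    with Scan show ?thesis
      using assms(4,5) trans \<delta> tl[of _ "tl p"] by (cases p) (auto simp: sim_states_def split: tsym.splits)
  next
    case (Flush p)
    with s have "p \<in> short_words \<Sigma> K"
      by (auto simp: sim_states_def)
    with Flush show ?thesis
      using assms(4,5) trans tl[of _ "tl p"] by (cases p) (auto simp: sim_states_def)
  qed (use assms(2,4,5) trans \<open>[] \<in> short_words \<Sigma> K\<close> in \<open>auto simp: sim_states_def split: if_splits tsym.splits\<close>)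
qed

lemma valid_tm_gsm_tm:
  assumes "finite \<Sigma>" and bounded: "gsm_bounded \<Sigma> Q K \<delta> \<omega>" and "q0 < Q"
  shows "valid_tm 2 \<Sigma> (gsm_tm \<Sigma> Q K \<delta> \<omega> q0)"
  unfolding valid_tm_def
proof (intro conjI ballI allI impI)
  show "finite (tm_states (gsm_tm \<Sigma> Q K \<delta> \<omega> q0))"
    using \<open>finite \<Sigma>\<close> unfolding gsm_tm_def sim_states_def short_words_def
    by (auto intro!: finite_lists_length_le)
next
  fix q rs
  assume q: "q \<in> tm_states (gsm_tm \<Sigma> Q K \<delta> \<omega> q0) - tm_final (gsm_tm \<Sigma> Q K \<delta> \<omega> q0)"
    and "length rs = 2" and rs: "set rs \<subseteq> tape_syms (gsm_tm \<Sigma> Q K \<delta> \<omega> q0)"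
  obtain s where s: "s \<in> sim_states \<Sigma> Q K" "q = to_nat s"
    using q by (auto simp: gsm_tm_def)
  obtain r0 r1 where rs_eq: "rs = [r0, r1]"
    using \<open>length rs = 2\<close> by (auto simp: numeral_2_eq_2 length_Suc_conv)
  have syms: "tape_syms (gsm_tm \<Sigma> Q K \<delta> \<omega> q0) = {LMark, Blank} \<union> Sym ` \<Sigma>"
    by (simp add: tape_syms_def gsm_tm_def)
  obtain s' w0 w1 m0 m1 where trans: "sim_trans \<delta> \<omega> q0 s r0 r1 = (s', w0, w1, m0, m1)"
    by (metis prod_cases5)
  have "s' \<in> sim_states \<Sigma> Q K \<and> w0 \<in> {LMark, Blank} \<union> Sym ` \<Sigma> \<and> w1 \<in> {LMark, Blank} \<union> Sym ` \<Sigma>"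
    using sim_trans_closed[OF bounded \<open>q0 < Q\<close> s(1) _ _ trans] rs syms rs_eq by auto
  moreover have "tm_delta (gsm_tm \<Sigma> Q K \<delta> \<omega> q0) q rs =
      (to_nat s', [guard_write r0 w0, guard_write r1 w1], [guard_move r0 m0, guard_move r1 m1])"
    by (simp add: gsm_tm_def s(2) rs_eq trans)
  ultimately show "case tm_delta (gsm_tm \<Sigma> Q K \<delta> \<omega> q0) q rs of (q', ws, ms) \<Rightarrow>
      q' \<in> tm_states (gsm_tm \<Sigma> Q K \<delta> \<omega> q0) \<and> length ws = 2 \<and> length ms = 2 \<and>
      set ws \<subseteq> tape_syms (gsm_tm \<Sigma> Q K \<delta> \<omega> q0) \<and>
      (\<forall>i<2. (rs ! i = LMark \<longrightarrow> ws ! i = LMark \<and> ms ! i \<noteq> Lft) \<and> (rs ! i \<noteq> LMark \<longrightarrow> ws ! i \<noteq> LMark))"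
    using rs unfolding syms rs_eq
    by (auto simp: gsm_tm_def less_Suc_eq numeral_2_eq_2 guard_write_def guard_move_def)
qed (use assms in \<open>auto simp: gsm_tm_def sim_states_def\<close>)

lemma lintime_computable_gsm_fun:
  assumes "finite \<Sigma>" and bounded: "gsm_bounded \<Sigma> Q K \<delta> \<omega>" and "q0 < Q"
  shows "lintime_computable 2 \<Sigma> (gsm_fun \<delta> \<omega> q0)"
proof -
  let ?M = "gsm_tm \<Sigma> Q K \<delta> \<omega> q0"
  have "gsm_fun \<delta> \<omega> q0 x \<in> lists \<Sigma> \<and> (\<exists>t \<le> (3 * K + 6) * (length x + 1).
      case tm_run ?M t (init_config ?M x) of (q, tps, hs) \<Rightarrow>
        q \<in> tm_accept ?M \<and> has_output (tps ! 0) (gsm_fun \<delta> \<omega> q0 x))"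
    if x: "x \<in> lists \<Sigma>" for x
  proof -
    obtain q' u where run: "gsm_run \<delta> q0 x = (q', u)" by force
    define y where "y = gsm_fun \<delta> \<omega> q0 x"
    have y: "y = u @ \<omega> q'"
      using run by (simp add: y_def gsm_fun_def)
    have "set u \<subseteq> \<Sigma>" "length u \<le> K * length x"
      using set_gsm_run[of \<Sigma> \<delta> x q0] length_gsm_run[of \<delta> K q0 x] bounded x run
      by (auto simp: gsm_bounded_def)
    moreover have "set (\<omega> q') \<subseteq> \<Sigma>" "length (\<omega> q') \<le> K"
      using bounded by (auto simp: gsm_bounded_def)
    ultimately have "y \<in> lists \<Sigma>" and len: "length y \<le> K * length x + K"
      by (auto simp: y)
    obtain t t1 hs where "tm_run ?M (length x + 2 * length y + max (length x) (length y) + 6)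
        (init_config ?M x) = (to_nat Halt, [t, t1], hs)" and "has_output t y"
      using gsm_simulation.tm_run_gsm_tm unfolding y_def by blast
    moreover have "length x + 2 * length y + max (length x) (length y) + 6 \<le> (3 * K + 6) * (length x + 1)"
      using len by (simp add: max_def algebra_simps)
    ultimately show ?thesis
      using \<open>y \<in> lists \<Sigma>\<close> unfolding y_def[symmetric]
      by (intro conjI exI[of _ "length x + 2 * length y + max (length x) (length y) + 6"])
        (simp_all add: gsm_tm_def)
  qed
  then show ?thesis
    unfolding lintime_computable_def using valid_tm_gsm_tm[OF assms]
    by (intro exI[of _ ?M] exI[of _ "3 * K + 6"]) auto
qed

section \<open>Generating sets and codings of monoids\<close>

inductive_set right_products :: "('g, 'b) monoid_scheme \<Rightarrow> 'g set \<Rightarrow> 'g set" for G S where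
  one: "\<one>\<^bsub>G\<^esub> \<in> right_products G S"
| mult: "g \<in> right_products G S \<Longrightarrow> s \<in> S \<Longrightarrow> g \<otimes>\<^bsub>G\<^esub> s \<in> right_products G S"

lemma (in monoid) foldr_mult_closed:
  "set xs \<subseteq> carrier G \<Longrightarrow> y \<in> carrier G \<Longrightarrow> foldr (\<otimes>) xs y \<in> carrier G"
  by (induction xs) auto

lemma (in monoid) foldr_mult_snoc:
  "set xs \<subseteq> carrier G \<Longrightarrow> s \<in> carrier G \<Longrightarrow> foldr (\<otimes>) (xs @ [s]) \<one> = foldr (\<otimes>) xs \<one> \<otimes> s"
  by (induction xs) (auto simp: m_assoc foldr_mult_closed)

lemma (in monoid) right_products_eq_foldr:
  assumes "S \<subseteq> carrier G" and "g \<in> right_products G S"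
  shows "\<exists>xs. set xs \<subseteq> S \<and> g = foldr (\<otimes>) xs \<one>"
  using assms(2)
proof induction
  case one
  show ?case
    by (auto intro: exI[of _ "[]"])
next
  case (mult g s)
  then obtain xs where xs: "set xs \<subseteq> S" "g = foldr (\<otimes>) xs \<one>"
    by blast
  moreover have "s \<in> carrier G"
    using mult.hyps(2) assms(1) by blast
  ultimately show ?case
    using foldr_mult_snoc[of xs s] mult.hyps(2) assms(1) by (intro exI[of _ "xs @ [s]"]) auto
qed

lemma (in monoid) semigroup_generates_right_products:
  assumes "S \<subseteq> carrier G" and "carrier G \<subseteq> right_products G S"
    and "s \<in> S" and "s' \<in> S" and "s \<otimes> s' = \<one>"
  shows "semigroup_generates G S"
  unfolding semigroup_generates_def
proof (intro conjI ballI)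
  fix g
  assume "g \<in> carrier G"
  then obtain xs where xs: "set xs \<subseteq> S" "g = foldr (\<otimes>) xs \<one>"
    using assms(1,2) right_products_eq_foldr by blast
  show "\<exists>xs. xs \<noteq> [] \<and> set xs \<subseteq> S \<and> g = foldr (\<otimes>) xs \<one>"
  proof (cases "xs = []")
    case True
    have "s' \<in> carrier G"
      using assms(1,4) by blast
    with True xs assms(3-5) show ?thesis
      by (intro exI[of _ "[s, s']"]) auto
  qed (use xs in blast)
qed (rule assms(1))

lemma cayley_lintime_wrt_by_code:
  fixes G :: "('g, 'b) monoid_scheme" and E :: "'g \<Rightarrow> nat list"
  assumes "monoid G" and "finite \<Sigma>" and "inj_on E (carrier G)" and "E ` carrier G \<subseteq> lists \<Sigma>"
    and "S \<subseteq> carrier G"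
    and "\<And>s. s \<in> S \<Longrightarrow> \<exists>f. lintime_computable k \<Sigma> f \<and> (\<forall>g \<in> carrier G. f (E g) = E (g \<otimes>\<^bsub>G\<^esub> s))"
  shows "cayley_lintime_wrt k G S"
  unfolding cayley_lintime_wrt_def
proof (intro exI[of _ \<Sigma>] exI[of _ "E ` carrier G"] exI[of _ "inv_into (carrier G) E"] conjI ballI)
  show "bij_betw (inv_into (carrier G) E) (E ` carrier G) (carrier G)"
    using assms(3) by (rule bij_betw_inv_into[OF inj_on_imp_bij_betw])
  fix s
  assume "s \<in> S"
  then obtain f where f: "lintime_computable k \<Sigma> f" "\<forall>g \<in> carrier G. f (E g) = E (g \<otimes>\<^bsub>G\<^esub> s)"
    using assms(6) by blast
  have "f w \<in> E ` carrier G \<and> inv_into (carrier G) E (f w) = inv_into (carrier G) E w \<otimes>\<^bsub>G\<^esub> s"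
    if w: "w \<in> E ` carrier G" for w
  proof -
    obtain g where g: "g \<in> carrier G" "w = E g"
      using w by blast
    moreover have "g \<otimes>\<^bsub>G\<^esub> s \<in> carrier G"
      using \<open>s \<in> S\<close> assms(5) by (intro monoid.m_closed[OF assms(1) g(1)]) blast
    ultimately show ?thesis
      using f(2) assms(3) by (simp add: inv_into_f_f)
  qed
  with f(1) show "\<exists>f. lintime_computable k \<Sigma> f \<and> (\<forall>w \<in> E ` carrier G. f w \<in> E ` carrier G \<and>
      inv_into (carrier G) E (f w) = inv_into (carrier G) E w \<otimes>\<^bsub>G\<^esub> s)"
    by blast
qed (use assms(2,4) in simp_all)

section \<open>The lamplighter group over \<open>\<int>\<^sup>2\<close>\<close>

lemma lamplighter2_mult [simp]:
  "(f, v) \<otimes>\<^bsub>lamplighter2\<^esub> (g, w) =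
    (\<lambda>p. f p \<noteq> g (fst p - fst v, snd p - snd v), (fst v + fst w, snd v + snd w))"
  by (simp add: lamplighter2_def)

lemma lamplighter2_one [simp]: "\<one>\<^bsub>lamplighter2\<^esub> = (\<lambda>_. False, (0, 0))"
  by (simp add: lamplighter2_def)

lemma lamplighter2_carrier: "(f, v) \<in> carrier lamplighter2 \<longleftrightarrow> finite {p. f p}"
  by (simp add: lamplighter2_def)

lemma finite_translate:
  fixes f :: "int \<times> int \<Rightarrow> bool"
  assumes "finite {p. f p}"
  shows "finite {p. f (fst p - a, snd p - b)}"
proof -
  have "inj (\<lambda>p :: int \<times> int. (fst p - a, snd p - b))"
    by (auto simp: inj_def prod_eq_iff)
  from finite_vimageI[OF assms this] show ?thesis
    by (simp add: vimage_def)
qed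

lemma lamplighter2_group: "group lamplighter2"
proof (rule groupI)
  fix x y
  assume "x \<in> carrier lamplighter2" "y \<in> carrier lamplighter2"
  moreover obtain f v g w where "x = (f, v)" "y = (g, w)"
    by (metis surj_pair)
  ultimately have "finite ({p. f p} \<union> {p. g (fst p - fst v, snd p - snd v)})"
    by (simp add: lamplighter2_carrier finite_translate)
  then have "finite {p. f p \<noteq> g (fst p - fst v, snd p - snd v)}"
    by (rule finite_subset[rotated]) auto
  with \<open>x = (f, v)\<close> \<open>y = (g, w)\<close> show "x \<otimes>\<^bsub>lamplighter2\<^esub> y \<in> carrier lamplighter2"
    by (simp add: lamplighter2_carrier)
next
  fix x y z
  show "x \<otimes>\<^bsub>lamplighter2\<^esub> y \<otimes>\<^bsub>lamplighter2\<^esub> z = x \<otimes>\<^bsub>lamplighter2\<^esub> (y \<otimes>\<^bsub>lamplighter2\<^esub> z)"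
    by (cases x, cases y, cases z) (auto simp: fun_eq_iff algebra_simps)
next
  fix x
  assume x: "x \<in> carrier lamplighter2"
  then obtain g w where x_eq: "x = (g, w)" and "finite {p. g p}"
    by (cases x) (simp add: lamplighter2_carrier)
  let ?y = "(\<lambda>p. g (fst p + fst w, snd p + snd w), (- fst w, - snd w))"
  have "?y \<in> carrier lamplighter2"
    using finite_translate[OF \<open>finite {p. g p}\<close>, of "- fst w" "- snd w"] by (simp add: lamplighter2_carrier)
  moreover have "?y \<otimes>\<^bsub>lamplighter2\<^esub> x = \<one>\<^bsub>lamplighter2\<^esub>"
    by (simp add: x_eq)
  ultimately show "\<exists>y\<in>carrier lamplighter2. y \<otimes>\<^bsub>lamplighter2\<^esub> x = \<one>\<^bsub>lamplighter2\<^esub>"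
    by blast
qed (auto simp: lamplighter2_carrier)

definition toggle :: "(int \<times> int \<Rightarrow> bool) \<times> int \<times> int" where
  "toggle = (\<lambda>p. p = (0, 0), (0, 0))"

definition walk :: "int \<Rightarrow> int \<Rightarrow> (int \<times> int \<Rightarrow> bool) \<times> int \<times> int" where
  "walk a b = (\<lambda>_. False, (a, b))"

definition lamplighter2_gens :: "((int \<times> int \<Rightarrow> bool) \<times> int \<times> int) set" where
  "lamplighter2_gens = {toggle, walk 1 0, walk (-1) 0, walk 0 1, walk 0 (-1)}"

lemma lamplighter2_gens_carrier: "lamplighter2_gens \<subseteq> carrier lamplighter2"
  by (auto simp: lamplighter2_gens_def toggle_def walk_def lamplighter2_carrier)

abbreviation lamplighter2_products :: "((int \<times> int \<Rightarrow> bool) \<times> int \<times> int) set" where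
  "lamplighter2_products \<equiv> right_products lamplighter2 lamplighter2_gens"

lemma lamplighter2_products_walk_unit:
  assumes "(f, (x, y)) \<in> lamplighter2_products"
  shows "(f, (x + 1, y)) \<in> lamplighter2_products" "(f, (x - 1, y)) \<in> lamplighter2_products"
    "(f, (x, y + 1)) \<in> lamplighter2_products" "(f, (x, y - 1)) \<in> lamplighter2_products"
  using right_products.mult[OF assms, of "walk 1 0"] right_products.mult[OF assms, of "walk (-1) 0"]
    right_products.mult[OF assms, of "walk 0 1"] right_products.mult[OF assms, of "walk 0 (-1)"]
  by (simp_all add: lamplighter2_gens_def walk_def)

lemma lamplighter2_products_walk:
  assumes "(f, v) \<in> lamplighter2_products"
  shows "(f, w) \<in> lamplighter2_products"
proof -
  have x: "(f, (fst v + d, snd v)) \<in> lamplighter2_products" for d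
  proof (induction d rule: int_induct[where k = 0])
    case (step1 d)
    then show ?case
      using lamplighter2_products_walk_unit(1)[of f "fst v + d" "snd v"] by (simp add: add.assoc)
  next
    case (step2 d)
    then show ?case
      using lamplighter2_products_walk_unit(2)[of f "fst v + d" "snd v"] by (simp add: algebra_simps)
  qed (use assms in simp)
  have "(f, (fst w, snd v + d)) \<in> lamplighter2_products" for d
  proof (induction d rule: int_induct[where k = 0])
    case (step1 d)
    then show ?case
      using lamplighter2_products_walk_unit(3)[of f "fst w" "snd v + d"] by (simp add: add.assoc)
  next
    case (step2 d)
    then show ?case
      using lamplighter2_products_walk_unit(4)[of f "fst w" "snd v + d"] by (simp add: algebra_simps)
  qed (use x[of "fst w - fst v"] in simp)
  from this[of "snd w - snd v"] show ?thesis
    by simp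
qed

lemma lamplighter2_products_toggle:
  assumes "(f, v) \<in> lamplighter2_products"
  shows "(\<lambda>p. f p \<noteq> (p = w), v) \<in> lamplighter2_products"
proof -
  have "(f, w) \<in> lamplighter2_products"
    using assms by (rule lamplighter2_products_walk)
  then have "(f, w) \<otimes>\<^bsub>lamplighter2\<^esub> toggle \<in> lamplighter2_products"
    by (rule right_products.mult) (simp add: lamplighter2_gens_def)
  moreover have "(f, w) \<otimes>\<^bsub>lamplighter2\<^esub> toggle = (\<lambda>p. f p \<noteq> (p = w), w)"
    by (auto simp: toggle_def fun_eq_iff)
  ultimately have "(\<lambda>p. f p \<noteq> (p = w), w) \<in> lamplighter2_products"
    by simp
  then show ?thesis
    by (rule lamplighter2_products_walk)
qed

lemma lamplighter2_products_finite:
  "finite F \<Longrightarrow> (\<lambda>p. p \<in> F, v) \<in> lamplighter2_products"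
proof (induction F arbitrary: v rule: finite_induct)
  case empty
  show ?case
    using right_products.one[of lamplighter2 lamplighter2_gens] lamplighter2_products_walk by fastforce
next
  case (insert x F)
  then have "(\<lambda>p. (p \<in> F) \<noteq> (p = x), v) \<in> lamplighter2_products"
    using lamplighter2_products_toggle by blast
  moreover have "(\<lambda>p. (p \<in> F) \<noteq> (p = x)) = (\<lambda>p. p \<in> insert x F)"
    using insert by auto
  ultimately show ?case
    by simp
qed

lemma lamplighter2_generates: "semigroup_generates lamplighter2 lamplighter2_gens"
proof (rule monoid.semigroup_generates_right_products[where s = "walk 1 0" and s' = "walk (-1) 0"])
  show "carrier lamplighter2 \<subseteq> lamplighter2_products"
  proof
    fix g
    assume "g \<in> carrier lamplighter2"
    then obtain f v where "g = (f, v)" "finite {p. f p}"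
      by (cases g) (simp add: lamplighter2_carrier)
    then show "g \<in> lamplighter2_products"
      using lamplighter2_products_finite[of "{p. f p}" v] by simp
  qed
qed (use lamplighter2_gens_carrier in \<open>auto simp: lamplighter2_group group.is_monoid lamplighter2_gens_def walk_def\<close>)

section \<open>Coding lamplighter elements by words\<close>

definition signed_unary :: "nat \<Rightarrow> nat \<Rightarrow> int \<Rightarrow> nat list" where
  "signed_unary a b z = (if 0 \<le> z then replicate (nat z) a else replicate (nat (- z)) b)"

definition point_code :: "int \<times> int \<Rightarrow> nat list" where
  "point_code p = signed_unary 0 1 (fst p) @ signed_unary 2 3 (snd p) @ [4]"

definition lit_lamps :: "(int \<times> int \<Rightarrow> bool) \<Rightarrow> int \<times> int \<Rightarrow> (int \<times> int) set" where
  "lit_lamps f v = {p. f (fst p + fst v, snd p + snd v)}"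

definition lamplighter2_code :: "(int \<times> int \<Rightarrow> bool) \<times> int \<times> int \<Rightarrow> nat list" where
  "lamplighter2_code g =
     point_code (snd g) @ concat (map point_code (sorted_list_of_set (lit_lamps (fst g) (snd g))))"

lemma set_signed_unary: "set (signed_unary a b z) \<subseteq> {a, b}"
  by (auto simp: signed_unary_def)

lemma notin_set_signed_unary [simp]: "c \<noteq> a \<Longrightarrow> c \<noteq> b \<Longrightarrow> c \<notin> set (signed_unary a b z)"
  by (simp add: signed_unary_def)

lemma signed_unary_inj: "a \<noteq> b \<Longrightarrow> signed_unary a b z = signed_unary a b z' \<Longrightarrow> z = z'"
  by (auto simp: signed_unary_def replicate_eq_replicate split: if_splits)

lemma filter_signed_unary:
  "P a \<Longrightarrow> P b \<Longrightarrow> filter P (signed_unary a b z) = signed_unary a b z"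
  "\<not> P a \<Longrightarrow> \<not> P b \<Longrightarrow> filter P (signed_unary a b z) = []"
  by (simp_all add: signed_unary_def)

lemma point_code_inj:
  assumes "point_code p = point_code p'"
  shows "p = p'"
proof -
  have "signed_unary 0 1 (fst p) = signed_unary 0 1 (fst p')"
    using arg_cong[OF assms, of "filter (\<lambda>c. c < 2)"] by (simp add: point_code_def filter_signed_unary)
  moreover have "signed_unary 2 3 (snd p) = signed_unary 2 3 (snd p')"
    using arg_cong[OF assms, of "filter (\<lambda>c. 2 \<le> c \<and> c < 4)"] by (simp add: point_code_def filter_signed_unary)
  ultimately show ?thesis
    using signed_unary_inj[of 0 1] signed_unary_inj[of 2 3] by (simp add: prod_eq_iff)
qed

lemma point_code_ne_Nil [simp]: "point_code p \<noteq> []"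
  by (simp add: point_code_def)

lemma append_Cons_eq_append_Cons_iff:
  "x \<notin> set u \<Longrightarrow> x \<notin> set u' \<Longrightarrow> u @ x # r = u' @ x # r' \<longleftrightarrow> u = u' \<and> r = r'"
proof (induction u arbitrary: u')
  case Nil
  then show ?case by (cases u') auto
next
  case (Cons a u)
  then show ?case by (cases u') auto
qed

lemma point_code_snoc:
  obtains u where "point_code p = u @ [4]" "4 \<notin> set u"
  by (intro that[of "signed_unary 0 1 (fst p) @ signed_unary 2 3 (snd p)"]) (simp_all add: point_code_def)

lemma point_code_append_eq:
  assumes "point_code p @ r = point_code p' @ r'"
  shows "p = p' \<and> r = r'"
proof -
  obtain u u' where "point_code p = u @ [4]" "4 \<notin> set u" "point_code p' = u' @ [4]" "4 \<notin> set u'"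
    by (metis point_code_snoc)
  with assms show ?thesis
    using append_Cons_eq_append_Cons_iff[of 4 u u' r r'] point_code_inj[of p p'] by auto
qed

lemma concat_point_code_inj:
  "concat (map point_code ps) = concat (map point_code ps') \<Longrightarrow> ps = ps'"
proof (induction ps arbitrary: ps')
  case (Cons p ps)
  then obtain p' ps'' where "ps' = p' # ps''"
    by (cases ps') auto
  with Cons show ?case
    by (auto dest: point_code_append_eq)
next
  case Nil
  then show ?case
    by (cases ps') simp_all
qed

lemma finite_lit_lamps: "finite {p. f p} \<Longrightarrow> finite (lit_lamps f v)"
  using finite_translate[of f "- fst v" "- snd v"] by (simp add: lit_lamps_def)

lemma inj_on_lamplighter2_code: "inj_on lamplighter2_code (carrier lamplighter2)"
proof (rule inj_onI)
  fix g g'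
  assume "g \<in> carrier lamplighter2" "g' \<in> carrier lamplighter2" and eq: "lamplighter2_code g = lamplighter2_code g'"
  moreover obtain f v f' v' where g: "g = (f, v)" "g' = (f', v')"
    by (metis surj_pair)
  ultimately have fin: "finite (lit_lamps f v)" "finite (lit_lamps f' v')"
    by (simp_all add: lamplighter2_carrier finite_lit_lamps)
  from eq g have "v = v'" and
    "sorted_list_of_set (lit_lamps f v) = sorted_list_of_set (lit_lamps f' v')"
    by (auto simp: lamplighter2_code_def dest!: point_code_append_eq concat_point_code_inj)
  with fin have "lit_lamps f v = lit_lamps f' v'"
    using sorted_list_of_set_inject by blast
  then have "(fst q - fst v, snd q - snd v) \<in> lit_lamps f v \<longleftrightarrow>
      (fst q - fst v, snd q - snd v) \<in> lit_lamps f' v'" for q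
    by simp
  with \<open>v = v'\<close> have "f = f'"
    by (simp add: lit_lamps_def fun_eq_iff)
  with g \<open>v = v'\<close> show "g = g'"
    by simp
qed

lemma lamplighter2_code_in_lists: "lamplighter2_code g \<in> lists {0..4}"
proof -
  have "set (point_code p) \<subseteq> {0..4}" for p
    using set_signed_unary[of 0 1 "fst p"] set_signed_unary[of 2 3 "snd p"] by (auto simp: point_code_def)
  then show ?thesis
    by (simp add: lamplighter2_code_def lists_eq_set UN_subset_iff)
qed

section \<open>Transducers for the generators\<close>

text \<open>State 0 copies the position of the lamplighter. The lamp codes follow in increasing order; in
  state 1 the first letter of the next code tells whether that lamp lies below the origin (state 2
  copies such a code). The code \<open>[4]\<close> of the origin is deleted when met and otherwise inserted
  before the first code above the origin; state 3 then copies the rest.\<close>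

definition toggle_trans :: gsm_trans where
  "toggle_trans q a =
    (if q = 0 then (if a = 4 then 1 else 0, [a])
     else if q = 1 then (if a = 1 \<or> a = 3 then (2, [a]) else if a = 4 then (3, []) else (3, [4, a]))
     else if q = 2 then (if a = 4 then 1 else 2, [a])
     else (3, [a]))"

definition toggle_final :: "nat \<Rightarrow> nat list" where
  "toggle_final q = (if q = 1 then [4] else [])"

lemma point_code_origin: "point_code (0, 0) = [4]"
  by (simp add: point_code_def signed_unary_def)

lemma point_code_less_origin:
  assumes "p < (0, 0)"
  obtains c w where "point_code p = c # w @ [4]" "c \<in> {1, 3}" "4 \<notin> set w"
proof (cases "fst p < 0")
  case True
  then have "signed_unary 0 1 (fst p) = 1 # replicate (nat (- fst p) - 1) 1"
    by (simp add: signed_unary_def replicate_Suc[symmetric] del: replicate_Suc)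
  with that[of 1 "replicate (nat (- fst p) - 1) 1 @ signed_unary 2 3 (snd p)"] show ?thesis
    by (simp add: point_code_def)
next
  case False
  with assms have "fst p = 0" "snd p < 0"
    by (auto simp: less_prod_def)
  then have "point_code p = 3 # replicate (nat (- snd p) - 1) 3 @ [4]"
    by (simp add: point_code_def signed_unary_def replicate_Suc[symmetric] del: replicate_Suc)
  with that show ?thesis
    by auto
qed

lemma point_code_greater_origin:
  assumes "(0, 0) < p"
  obtains c w where "point_code p = c # w @ [4]" "c \<in> {0, 2}" "4 \<notin> set w"
proof (cases "0 < fst p")
  case True
  then have "signed_unary 0 1 (fst p) = 0 # replicate (nat (fst p) - 1) 0"
    by (simp add: signed_unary_def replicate_Suc[symmetric] del: replicate_Suc)
  with that[of 0 "replicate (nat (fst p) - 1) 0 @ signed_unary 2 3 (snd p)"] show ?thesis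
    by (simp add: point_code_def)
next
  case False
  with assms have "fst p = 0" "0 < snd p"
    by (auto simp: less_prod_def)
  then have "point_code p = 2 # replicate (nat (snd p) - 1) 2 @ [4]"
    by (simp add: point_code_def signed_unary_def replicate_Suc[symmetric] del: replicate_Suc)
  with that show ?thesis
    by auto
qed

lemma gsm_run_toggle_code_tail:
  "q = 0 \<or> q = 2 \<Longrightarrow> 4 \<notin> set w \<Longrightarrow> gsm_run toggle_trans q (w @ [4]) = (1, w @ [4])"
  by (rule gsm_run_append[OF gsm_run_copy]) (auto simp: toggle_trans_def)

lemma gsm_run_toggle_after_origin: "gsm_run toggle_trans 3 w = (3, w)"
  by (rule gsm_run_copy) (simp add: toggle_trans_def)

lemma gsm_fun_toggle_after_origin: "gsm_fun toggle_trans toggle_final 3 w = w"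
  by (simp add: gsm_fun_def gsm_run_toggle_after_origin toggle_final_def)

lemma gsm_fun_toggle_lamps:
  assumes "sorted_wrt (<) ps"
  shows "\<exists>ps'. sorted_wrt (<) ps' \<and> set ps' = sym_diff (set ps) {(0, 0)} \<and>
    gsm_fun toggle_trans toggle_final 1 (concat (map point_code ps)) = concat (map point_code ps')"
  using assms
proof (induction ps)
  case Nil
  show ?case
    by (intro exI[of _ "[(0, 0)]"]) (simp add: gsm_fun_def toggle_final_def point_code_origin)
next
  case (Cons p ps)
  then obtain ps' where ps': "sorted_wrt (<) ps'" "set ps' = sym_diff (set ps) {(0, 0)}"
    "gsm_fun toggle_trans toggle_final 1 (concat (map point_code ps)) = concat (map point_code ps')"
    by auto
  have above: "\<forall>p' \<in> set ps. p < p'"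
    using Cons.prems by simp
  consider "p < (0, 0)" | "p = (0, 0)" | "(0, 0) < p"
    by (rule linorder_cases)
  then show ?case
  proof cases
    case 1
    then obtain c w where w: "point_code p = c # w @ [4]" "c \<in> {1, 3}" "4 \<notin> set w"
      by (rule point_code_less_origin)
    then have "gsm_run toggle_trans 1 (point_code p) = (1, point_code p)"
      using gsm_run_toggle_code_tail[of 2 w] by (auto simp: toggle_trans_def)
    with 1 above ps' show ?thesis
      by (intro exI[of _ "p # ps'"]) (auto simp: gsm_fun_append)
  next
    case 2
    then have "gsm_run toggle_trans 1 (point_code p) = (3, [])"
      by (simp add: point_code_origin toggle_trans_def)
    with 2 above Cons.prems show ?thesis
      by (intro exI[of _ ps]) (auto simp: gsm_fun_append gsm_fun_toggle_after_origin)
  next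
    case 3
    then obtain c w where w: "point_code p = c # w @ [4]" "c \<in> {0, 2}" "4 \<notin> set w"
      by (rule point_code_greater_origin)
    then have "gsm_run toggle_trans 1 (point_code p) = (3, 4 # point_code p)"
      using gsm_run_toggle_after_origin[of "w @ [4]"] by (auto simp: toggle_trans_def)
    with 3 above Cons.prems show ?thesis
      by (intro exI[of _ "(0, 0) # p # ps"])
        (auto simp: gsm_fun_append gsm_fun_toggle_after_origin point_code_origin dest: order.strict_trans)
  qed
qed

lemma gsm_fun_toggle_code:
  assumes "g \<in> carrier lamplighter2"
  shows "gsm_fun toggle_trans toggle_final 0 (lamplighter2_code g) =
    lamplighter2_code (g \<otimes>\<^bsub>lamplighter2\<^esub> toggle)"
proof -
  obtain f v where g: "g = (f, v)" and "finite (lit_lamps f v)"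
    using assms by (metis finite_lit_lamps lamplighter2_carrier surj_pair)
  obtain ps' where ps': "sorted_wrt (<) ps'"
    "set ps' = sym_diff (lit_lamps f v) {(0, 0)}"
    "gsm_fun toggle_trans toggle_final 1 (concat (map point_code (sorted_list_of_set (lit_lamps f v)))) =
      concat (map point_code ps')"
    using gsm_fun_toggle_lamps[OF sorted_list_of_set.strict_sorted_key_list_of_set[of "lit_lamps f v"]]
      \<open>finite (lit_lamps f v)\<close> by auto
  have "gsm_run toggle_trans 0 (point_code v) = (1, point_code v)"
    using gsm_run_toggle_code_tail by (metis point_code_snoc)
  moreover have "g \<otimes>\<^bsub>lamplighter2\<^esub> toggle = (\<lambda>p. f p \<noteq> ((fst p - fst v, snd p - snd v) = (0, 0)), v)"
    by (simp add: g toggle_def)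
  moreover have "lit_lamps (\<lambda>p. f p \<noteq> ((fst p - fst v, snd p - snd v) = (0, 0))) v = set ps'"
    by (auto simp: ps'(2) lit_lamps_def)
  moreover have "sorted_list_of_set (set ps') = ps'"
    using ps'(1) by (simp add: sorted_list_of_set.idem_if_sorted_distinct strict_sorted_iff)
  ultimately show ?thesis
    using ps'(3) by (simp add: g lamplighter2_code_def gsm_fun_append)
qed

definition unary_succ :: "nat \<Rightarrow> nat \<Rightarrow> nat list \<Rightarrow> nat list" where
  "unary_succ a b w = (if w \<noteq> [] \<and> hd w = b then tl w else a # w)"

lemma unary_succ_signed_unary:
  assumes "a \<noteq> b" and "r = [] \<or> hd r \<notin> {a, b}"
  shows "unary_succ a b (signed_unary a b z @ r) = signed_unary a b (z + 1) @ r"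
proof (cases "0 \<le> z")
  case True
  then have "signed_unary a b (z + 1) = a # signed_unary a b z"
    by (simp add: signed_unary_def nat_add_distrib)
  moreover have "signed_unary a b z @ r = [] \<or> hd (signed_unary a b z @ r) \<noteq> b"
    using True assms by (cases "nat z") (auto simp: signed_unary_def)
  ultimately show ?thesis
    by (auto simp: unary_succ_def)
next
  case False
  then have "nat (- z) = Suc (nat (- z - 1))"
    by simp
  with False have "signed_unary a b z = b # signed_unary a b (z + 1)"
    by (auto simp: signed_unary_def)
  then show ?thesis
    by (simp add: unary_succ_def)
qed

lemma unary_succ_signed_unary_swap:
  assumes "a \<noteq> b" and "r = [] \<or> hd r \<notin> {a, b}"
  shows "unary_succ b a (signed_unary a b z @ r) = signed_unary a b (z - 1) @ r"
proof -
  have "signed_unary a b z' = signed_unary b a (- z')" for z'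
    by (simp add: signed_unary_def)
  with unary_succ_signed_unary[of b a r "- z"] assms show ?thesis
    by auto
qed

text \<open>States 0 and 1 add the step to the coordinate of the lamplighter, states 2 and 3 subtract it
  from that of each lamp: in states 0 and 2 the first letter of the coordinate is still to come, in
  states 1 and 3 the rest of the code is copied.\<close>

definition walk_trans :: "bool \<Rightarrow> nat \<Rightarrow> nat \<Rightarrow> gsm_trans" where
  "walk_trans skip_x u n q c =
    (if q = 0 then
       (if skip_x \<and> c < 2 then (0, [c]) else if c = n then (1, []) else if c = 4 then (2, [u, 4])
        else (1, [u, c]))
     else if q = 1 then (if c = 4 then 2 else 1, [c])
     else if q = 2 then
       (if skip_x \<and> c < 2 then (2, [c]) else if c = u then (3, []) else if c = 4 then (2, [n, 4])
        else (3, [n, c]))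
     else (if c = 4 then 2 else 3, [c]))"

lemma gsm_run_walk_trans:
  assumes "(q, a, b) = (0, u, n) \<or> (q, a, b) = (2, n, u)" and "u \<noteq> 4" "n \<noteq> 4"
    and "\<forall>c \<in> set s. skip_x \<and> c < 2" and "4 \<notin> set w" and "w = [] \<or> \<not> (skip_x \<and> hd w < 2)"
  shows "gsm_run (walk_trans skip_x u n) q (s @ w @ [4]) = (2, s @ unary_succ a b w @ [4])"
proof -
  have copy: "gsm_run (walk_trans skip_x u n) q' (w' @ [4]) = (2, w' @ [4])"
    if "q' = 1 \<or> q' = 3" "4 \<notin> set w'" for q' w'
    using that by (intro gsm_run_append[OF gsm_run_copy]) (auto simp: walk_trans_def)
  have "gsm_run (walk_trans skip_x u n) q s = (q, s)"
    using assms(1,4) by (intro gsm_run_copy) (auto simp: walk_trans_def)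
  moreover have "gsm_run (walk_trans skip_x u n) q (w @ [4]) = (2, unary_succ a b w @ [4])"
  proof (cases w)
    case Nil
    with assms(1-3) show ?thesis
      by (auto simp: walk_trans_def unary_succ_def)
  next
    case (Cons c w')
    with assms(1,5,6) copy[of "Suc q" w'] show ?thesis
      by (auto simp: walk_trans_def unary_succ_def)
  qed
  ultimately show ?thesis
    by (rule gsm_run_append)
qed

lemma gsm_run_walk_trans_x:
  assumes "(u, n, d) = (0, 1, 1) \<or> (u, n, d) = (1, 0, -1)"
  shows "gsm_run (walk_trans False u n) 0 (point_code p) = (2, point_code (fst p + d, snd p))"
    and "gsm_run (walk_trans False u n) 2 (point_code p) = (2, point_code (fst p - d, snd p))"
proof -
  have tail: "signed_unary 2 3 (snd p) = [] \<or> hd (signed_unary 2 3 (snd p)) \<notin> {0, 1}"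
    using set_signed_unary[of 2 3 "snd p"] by (cases "signed_unary 2 3 (snd p)") auto
  have run: "gsm_run (walk_trans False u n) q (point_code p) =
      (2, unary_succ a b (signed_unary 0 1 (fst p) @ signed_unary 2 3 (snd p)) @ [4])"
    if "(q, a, b) = (0, u, n) \<or> (q, a, b) = (2, n, u)" for q a b
    using gsm_run_walk_trans[OF that, where s = "[]" and w = "signed_unary 0 1 (fst p) @ signed_unary 2 3 (snd p)"]
      assms
    by (auto simp: point_code_def)
  show "gsm_run (walk_trans False u n) 0 (point_code p) = (2, point_code (fst p + d, snd p))"
    using run[of 0 u n] assms unary_succ_signed_unary[OF _ tail] unary_succ_signed_unary_swap[OF _ tail]
    by (auto simp: point_code_def)
  show "gsm_run (walk_trans False u n) 2 (point_code p) = (2, point_code (fst p - d, snd p))"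
    using run[of 2 n u] assms unary_succ_signed_unary[OF _ tail] unary_succ_signed_unary_swap[OF _ tail]
    by (auto simp: point_code_def)
qed

lemma gsm_run_walk_trans_y:
  assumes "(u, n, d) = (2, 3, 1) \<or> (u, n, d) = (3, 2, -1)"
  shows "gsm_run (walk_trans True u n) 0 (point_code p) = (2, point_code (fst p, snd p + d))"
    and "gsm_run (walk_trans True u n) 2 (point_code p) = (2, point_code (fst p, snd p - d))"
proof -
  have "\<forall>c \<in> set (signed_unary 0 1 (fst p)). True \<and> c < 2"
    using set_signed_unary[of 0 1 "fst p"] by auto
  moreover have "signed_unary 2 3 (snd p) = [] \<or> \<not> (True \<and> hd (signed_unary 2 3 (snd p)) < 2)"
    using set_signed_unary[of 2 3 "snd p"] by (cases "signed_unary 2 3 (snd p)") auto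
  ultimately have run: "gsm_run (walk_trans True u n) q (point_code p) =
      (2, signed_unary 0 1 (fst p) @ unary_succ a b (signed_unary 2 3 (snd p)) @ [4])"
    if "(q, a, b) = (0, u, n) \<or> (q, a, b) = (2, n, u)" for q a b
    using gsm_run_walk_trans[OF that, where s = "signed_unary 0 1 (fst p)" and w = "signed_unary 2 3 (snd p)"]
      assms by (auto simp: point_code_def)
  show "gsm_run (walk_trans True u n) 0 (point_code p) = (2, point_code (fst p, snd p + d))"
    using run[of 0 u n] assms unary_succ_signed_unary[of 2 3 "[]"] unary_succ_signed_unary_swap[of 2 3 "[]"]
    by (auto simp: point_code_def)
  show "gsm_run (walk_trans True u n) 2 (point_code p) = (2, point_code (fst p, snd p - d))"
    using run[of 2 n u] assms unary_succ_signed_unary[of 2 3 "[]"] unary_succ_signed_unary_swap[of 2 3 "[]"]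
    by (auto simp: point_code_def)
qed

lemma sorted_list_of_set_translate:
  fixes A :: "(int \<times> int) set"
  assumes "finite A"
  shows "sorted_list_of_set ((\<lambda>p. (fst p - a, snd p - b)) ` A) =
    map (\<lambda>p. (fst p - a, snd p - b)) (sorted_list_of_set A)"
proof -
  let ?t = "\<lambda>p :: int \<times> int. (fst p - a, snd p - b)"
  have "sorted_wrt (\<lambda>p q. ?t p < ?t q) (sorted_list_of_set A)"
    by (rule sorted_wrt_mono_rel[OF _ sorted_list_of_set.strict_sorted_key_list_of_set[of A]])
      (auto simp: less_prod_def)
  then have "sorted_wrt (<) (map ?t (sorted_list_of_set A))"
    by (simp add: sorted_wrt_map)
  with assms show ?thesis
    using sorted_list_of_set.idem_if_sorted_distinct[of "map ?t (sorted_list_of_set A)"]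
    by (simp add: strict_sorted_iff)
qed

lemma gsm_fun_walk_code:
  assumes cursor: "\<And>p. gsm_run \<delta> 0 (point_code p) = (2, point_code (fst p + a, snd p + b))"
    and lamp: "\<And>p. gsm_run \<delta> 2 (point_code p) = (2, point_code (fst p - a, snd p - b))"
    and "g \<in> carrier lamplighter2"
  shows "gsm_fun \<delta> (\<lambda>_. []) 0 (lamplighter2_code g) = lamplighter2_code (g \<otimes>\<^bsub>lamplighter2\<^esub> walk a b)"
proof -
  obtain f v where g: "g = (f, v)" and fin: "finite (lit_lamps f v)"
    using assms(3) by (metis finite_lit_lamps lamplighter2_carrier surj_pair)
  let ?t = "\<lambda>p :: int \<times> int. (fst p - a, snd p - b)"
  have lamps: "gsm_run \<delta> 2 (concat (map point_code ps)) = (2, concat (map (point_code \<circ> ?t) ps))" for ps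
  proof (induction ps)
    case (Cons p ps)
    then show ?case
      using gsm_run_append[OF lamp] by simp
  qed simp
  have "lit_lamps f (fst v + a, snd v + b) = ?t ` lit_lamps f v"
  proof (intro Set.set_eqI iffI)
    fix p
    assume "p \<in> lit_lamps f (fst v + a, snd v + b)"
    then show "p \<in> ?t ` lit_lamps f v"
      by (intro image_eqI[of _ _ "(fst p + a, snd p + b)"]) (simp_all add: lit_lamps_def algebra_simps)
  qed (auto simp: lit_lamps_def algebra_simps)
  moreover have "gsm_fun \<delta> (\<lambda>_. []) 2 (concat (map point_code ps)) = concat (map (point_code \<circ> ?t) ps)" for ps
    using lamps by (simp add: gsm_fun_def)
  ultimately show ?thesis
    using fin by (simp add: g walk_def lamplighter2_code_def gsm_fun_append[OF cursor] sorted_list_of_set_translate)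
qed

definition walk_params :: "(bool \<times> nat \<times> nat \<times> int \<times> int) set" where
  "walk_params = {(False, 0, 1, 1, 0), (False, 1, 0, -1, 0), (True, 2, 3, 0, 1), (True, 3, 2, 0, -1)}"

lemma gsm_fun_walk_trans_code:
  assumes "(skip_x, u, n, a, b) \<in> walk_params" and "g \<in> carrier lamplighter2"
  shows "gsm_fun (walk_trans skip_x u n) (\<lambda>_. []) 0 (lamplighter2_code g) =
    lamplighter2_code (g \<otimes>\<^bsub>lamplighter2\<^esub> walk a b)"
  using assms(1) unfolding walk_params_def
proof (elim insertE emptyE)
  assume "(skip_x, u, n, a, b) = (False, 0, 1, 1, 0)"
  then show ?thesis
    using gsm_run_walk_trans_x[where u = 0 and n = 1 and d = 1] by (intro gsm_fun_walk_code assms(2)) simp_all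
next
  assume "(skip_x, u, n, a, b) = (False, 1, 0, -1, 0)"
  then show ?thesis
    using gsm_run_walk_trans_x[where u = 1 and n = 0 and d = "-1"] by (intro gsm_fun_walk_code assms(2)) simp_all
next
  assume "(skip_x, u, n, a, b) = (True, 2, 3, 0, 1)"
  then show ?thesis
    using gsm_run_walk_trans_y[where u = 2 and n = 3 and d = 1] by (intro gsm_fun_walk_code assms(2)) simp_all
next
  assume "(skip_x, u, n, a, b) = (True, 3, 2, 0, -1)"
  then show ?thesis
    using gsm_run_walk_trans_y[where u = 3 and n = 2 and d = "-1"] by (intro gsm_fun_walk_code assms(2)) simp_all
qed

lemma lintime_computable_walk_trans:
  "(skip_x, u, n, a, b) \<in> walk_params \<Longrightarrow> lintime_computable 2 {0..4} (gsm_fun (walk_trans skip_x u n) (\<lambda>_. []) 0)"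
  by (rule lintime_computable_gsm_fun[where Q = 4 and K = 2])
    (auto simp: gsm_bounded_def walk_trans_def walk_params_def)

lemma lintime_computable_toggle_trans: "lintime_computable 2 {0..4} (gsm_fun toggle_trans toggle_final 0)"
  by (rule lintime_computable_gsm_fun[where Q = 4 and K = 2])
    (auto simp: gsm_bounded_def toggle_trans_def toggle_final_def)

lemma lintime_computable_lamplighter2_gens:
  assumes "s \<in> lamplighter2_gens"
  shows "\<exists>f. lintime_computable 2 {0..4} f \<and>
    (\<forall>g \<in> carrier lamplighter2. f (lamplighter2_code g) = lamplighter2_code (g \<otimes>\<^bsub>lamplighter2\<^esub> s))"
proof -
  consider "s = toggle" | skip_x u n a b where "(skip_x, u, n, a, b) \<in> walk_params" "s = walk a b"
    using assms unfolding lamplighter2_gens_def walk_params_def by blast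
  then show ?thesis
  proof cases
    case 1
    with lintime_computable_toggle_trans gsm_fun_toggle_code show ?thesis
      by blast
  next
    case 2
    with lintime_computable_walk_trans gsm_fun_walk_trans_code show ?thesis
      by blast
  qed
qed

theorem theorem2p2:
  shows "cayley_lintime 2 lamplighter2"
  unfolding cayley_lintime_def
proof (intro conjI exI[of _ lamplighter2_gens])
  show "group lamplighter2"
    by (rule lamplighter2_group)
  show "finite lamplighter2_gens"
    by (simp add: lamplighter2_gens_def)
  show "semigroup_generates lamplighter2 lamplighter2_gens"
    by (rule lamplighter2_generates)
  show "cayley_lintime_wrt 2 lamplighter2 lamplighter2_gens"
    by (rule cayley_lintime_wrt_by_code[OF group.is_monoid[OF lamplighter2_group] _ inj_on_lamplighter2_code _
      lamplighter2_gens_carrier lintime_computable_lamplighter2_gens])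
      (simp_all add: image_subset_iff lamplighter2_code_in_lists)
qed

end
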